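(* $11\notin\operatorname{Spec}(32_{65})$.
   Context: $32_{65}$ is the finite integral symmetric relation algebra with atoms $1'$, $a$, $b$, $c$, all symmetric, in which a diversity cycle $xyz$ (with $x,y,z\in\{a,b,c\}$) is mandatory (i.e. $x;y\ge z$) if it involves $a$ and forbidden (i.e. $x;y\cdot z=0$) otherwise. A representation over a set $U$ is an embedding into the full relation algebra on $U\times U$. $\operatorname{Spec}(A)$ is the set of cardinals $\alpha\le\omega$ such that $A$ has a representation over a set of cardinality $\alpha$. *)

theory Defs
  imports Main
begin

text \<open>The finite relation algebra 32_65, given concretely as the complex algebra of its
atom structure: elements are sets of atoms, with atoms E (the identity 1'), a, b, c.\<close>

datatype atom = E | Aa | Ab | Ac

definition diversity :: "atom \<Rightarrow> bool" where
  "diversity x \<longleftrightarrow> x \<noteq> E"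

text \<open>Allowed (consistent) triples: z \<le> x;y. Identity triples as usual; a diversity
cycle xyz is mandatory iff it involves a, and forbidden otherwise.\<close>
definition atom_comp :: "atom \<Rightarrow> atom \<Rightarrow> atom set" where
  "atom_comp x y =
     (if x = E then {y}
      else if y = E then {x}
      else (if x = y then {E} else {}) \<union>
           {z. z \<noteq> E \<and> (x = Aa \<or> y = Aa \<or> z = Aa)})"

text \<open>Operations of the algebra 32_65 (all atoms symmetric, so converse is the identity).\<close>
definition ra_comp :: "atom set \<Rightarrow> atom set \<Rightarrow> atom set" where
  "ra_comp X Y = (\<Union>x\<in>X. \<Union>y\<in>Y. atom_comp x y)"

definition ra_conv :: "atom set \<Rightarrow> atom set" where
  "ra_conv X = X"

definition ra_one :: "atom set" where
  "ra_one = {E}"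

definition representation :: "'u set \<Rightarrow> (atom set \<Rightarrow> ('u \<times> 'u) set) \<Rightarrow> bool" where
  "representation U h \<longleftrightarrow>
     (\<forall>X. h X \<subseteq> U \<times> U) \<and>
     inj h \<and>
     (\<forall>X Y. h (X \<union> Y) = h X \<union> h Y) \<and>
     (\<forall>X. h (- X) = (U \<times> U) - h X) \<and>
     h ra_one = Id_on U \<and>
     (\<forall>X. h (ra_conv X) = (h X)\<inverse>) \<and>
     (\<forall>X Y. h (ra_comp X Y) = h X O h Y)"

definition has_representation_over :: "'u set \<Rightarrow> bool" where
  "has_representation_over U \<longleftrightarrow> (\<exists>h. representation U h)"

end

theory Submission
  imports Defs
begin

text \<open>Let \<open>G\<close> be the image of \<open>b + c\<close> under a representation over \<open>U\<close>, a symmetric graph on \<open>U\<close>.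
Since \<open>b;b\<close>, \<open>c;c\<close>, \<open>b;c\<close>, \<open>c;b\<close> are all below \<open>1' + a\<close>, the graph \<open>G\<close> is triangle-free; since \<open>a\<close> is
below each of them, two distinct non-adjacent points have four common neighbours, one for
each choice of \<open>b\<close> or \<open>c\<close> on the two legs. Every point \<open>x\<close> has a neighbour \<open>q\<close>, and \<open>b + c \<le> a;a\<close>
yields non-neighbours \<open>y\<close>, \<open>y'\<close> of \<open>x\<close> that are adjacent to each other. By triangle-freeness the
common neighbourhoods of \<open>x\<close> with \<open>y\<close> and with \<open>y'\<close> are disjoint, so every point has at least
eight neighbours. The neighbourhoods of two adjacent points are again disjoint, hence \<open>|U| \<ge> 16\<close>.\<close>

lemma adjacent_common_neighbours_disjoint:
  assumes "sym G" and "G O G \<inter> G = {}" and "(y, y') \<in> G"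
  shows "G `` {y} \<inter> G `` {y'} = {}"
  using assms by (auto dest: symD)

lemma card_neighbours_ge_8:
  assumes "finite (G `` {x})" and "sym G" and "G O G \<inter> G = {}" and "(y, y') \<in> G"
    and "4 \<le> card (G `` {x} \<inter> G `` {y})" and "4 \<le> card (G `` {x} \<inter> G `` {y'})"
  shows "8 \<le> card (G `` {x})"
proof -
  have "(G `` {x} \<inter> G `` {y}) \<inter> (G `` {x} \<inter> G `` {y'}) = {}"
    using adjacent_common_neighbours_disjoint[OF assms(2-4)] by blast
  then have "card (G `` {x} \<inter> G `` {y}) + card (G `` {x} \<inter> G `` {y'})
      = card ((G `` {x} \<inter> G `` {y}) \<union> (G `` {x} \<inter> G `` {y'}))"
    using assms(1) by (intro card_Un_disjoint[symmetric]) auto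
  also have "\<dots> \<le> card (G `` {x})"
    using assms(1) by (intro card_mono) auto
  finally show ?thesis
    using assms(5,6) by linarith
qed

lemma triangle_free_card_ge_16:
  assumes fin: "finite U" and "U \<noteq> {}" and G_U: "G \<subseteq> U \<times> U" and sym: "sym G"
    and triangle_free: "G O G \<inter> G = {}"
    and neighbour: "\<And>x. x \<in> U \<Longrightarrow> G `` {x} \<noteq> {}"
    and common: "\<And>x y. x \<in> U \<Longrightarrow> y \<in> U \<Longrightarrow> x \<noteq> y \<Longrightarrow> (x, y) \<notin> G \<Longrightarrow>
      4 \<le> card (G `` {x} \<inter> G `` {y})"
    and edge: "\<And>x q. (x, q) \<in> G \<Longrightarrow> \<exists>w\<in>U. w \<noteq> x \<and> (x, w) \<notin> G \<and> (w, q) \<notin> G"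
  shows "16 \<le> card U"
proof -
  have fin_nbhd: "finite (G `` {x})" for x
    using G_U fin by (auto intro: finite_subset)
  have many_neighbours: "8 \<le> card (G `` {x})" if x: "x \<in> U" for x
  proof -
    obtain q where xq: "(x, q) \<in> G"
      using neighbour[OF x] by blast
    then obtain w where w: "w \<in> U" "w \<noteq> x" "(x, w) \<notin> G" "(w, q) \<notin> G"
      using edge by blast
    have "q \<in> U" and "w \<noteq> q"
      using xq w(3) G_U by auto
    then have "4 \<le> card (G `` {w} \<inter> G `` {q})"
      using common w by blast
    then obtain z where wz: "(w, z) \<in> G" and qz: "(q, z) \<in> G"
      by (metis Image_singleton_iff card.empty disjoint_iff not_numeral_le_zero)
    have "z \<in> U" "z \<noteq> x"
      using wz w(3) G_U sym by (auto dest: symD)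
    moreover have "(x, z) \<notin> G"
      using xq qz sym triangle_free by (auto dest: symD)
    ultimately have "4 \<le> card (G `` {x} \<inter> G `` {z})"
      using common x by blast
    moreover have "4 \<le> card (G `` {x} \<inter> G `` {w})"
      using common x w by auto
    ultimately show ?thesis
      using card_neighbours_ge_8[OF fin_nbhd sym triangle_free wz] by blast
  qed
  obtain x where x: "x \<in> U"
    using \<open>U \<noteq> {}\<close> by blast
  obtain u where xu: "(x, u) \<in> G"
    using neighbour[OF x] by blast
  have u: "u \<in> U"
    using xu G_U by blast
  have "card (G `` {x}) + card (G `` {u}) = card (G `` {x} \<union> G `` {u})"
    using adjacent_common_neighbours_disjoint[OF sym triangle_free xu] fin_nbhd
    by (intro card_Un_disjoint[symmetric]) auto
  also have "\<dots> \<le> card U"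
    using G_U fin by (intro card_mono) auto
  finally show ?thesis
    using many_neighbours[OF x] many_neighbours[OF u] by linarith
qed

lemma ra_comp_bc_bc_Int_bc: "ra_comp {Ab, Ac} {Ab, Ac} \<inter> {Ab, Ac} = {}"
  by (auto simp: ra_comp_def atom_comp_def)

lemma bc_le_ra_comp_a_a: "{Ab, Ac} \<subseteq> ra_comp {Aa} {Aa}"
  by (auto simp: ra_comp_def atom_comp_def)

lemma identity_le_ra_comp_b_b: "{E} \<subseteq> ra_comp {Ab} {Ab}"
  by (simp add: ra_comp_def atom_comp_def)

lemma a_le_ra_comp_b_or_c:
  "X \<in> {Ab, Ac} \<Longrightarrow> Y \<in> {Ab, Ac} \<Longrightarrow> {Aa} \<subseteq> ra_comp {X} {Y}"
  by (auto simp: ra_comp_def atom_comp_def)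

locale representation_32_65 =
  fixes U :: "'u set" and h :: "atom set \<Rightarrow> ('u \<times> 'u) set"
  assumes rep: "representation U h"
begin

lemma h_subset: "h X \<subseteq> U \<times> U"
  using rep unfolding representation_def by (elim conjE) blast

lemma h_Un: "h (X \<union> Y) = h X \<union> h Y"
  using rep unfolding representation_def by (elim conjE) blast

lemma h_Compl: "h (- X) = U \<times> U - h X"
  using rep unfolding representation_def by (elim conjE) blast

lemma h_identity: "h {E} = Id_on U"
  using rep unfolding representation_def ra_one_def by (elim conjE) blast

lemma h_converse: "(h X)\<inverse> = h X"
  using rep unfolding representation_def ra_conv_def by (elim conjE) blast

lemma h_comp: "h (ra_comp X Y) = h X O h Y"
  using rep unfolding representation_def by (elim conjE) metis

lemma h_UNIV: "h UNIV = U \<times> U"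
  using h_Un[of "{}" "- {}"] h_Compl[of "{}"] h_subset[of "{}"] by auto

lemma h_empty: "h {} = {}"
  using h_Compl[of UNIV] h_UNIV by simp

lemma h_Int: "h (X \<inter> Y) = h X \<inter> h Y"
  using h_Compl[of "- X \<union> - Y"] h_Un[of "- X" "- Y"] h_Compl[of X] h_Compl[of Y]
    h_subset[of X] h_subset[of Y] by auto

lemma h_mono: "X \<subseteq> Y \<Longrightarrow> h X \<subseteq> h Y"
  using h_Un[of X Y] by (metis Un_absorb1 Un_upper1)

lemma h_disjoint: "X \<inter> Y = {} \<Longrightarrow> h X \<inter> h Y = {}"
  using h_Int[of X Y] h_empty by simp

lemma h_le_comp: "X \<subseteq> ra_comp Y Z \<Longrightarrow> h X \<subseteq> h Y O h Z"
  using h_mono h_comp by metis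

lemma h_atoms_disjoint: "(x, y) \<in> h {X} \<Longrightarrow> (x, y) \<in> h {Y} \<Longrightarrow> X = Y"
  using h_disjoint[of "{X}" "{Y}"] by auto

definition bc_rel :: "('u \<times> 'u) set" where
  "bc_rel = h {Ab, Ac}"

lemma bc_subset: "bc_rel \<subseteq> U \<times> U"
  by (simp add: bc_rel_def h_subset)

lemma sym_bc: "sym bc_rel"
  unfolding bc_rel_def by (metis h_converse sym_conv_converse_eq)

lemma bc_triangle_free: "bc_rel O bc_rel \<inter> bc_rel = {}"
  using h_comp[of "{Ab, Ac}" "{Ab, Ac}"] h_disjoint[OF ra_comp_bc_bc_Int_bc]
  unfolding bc_rel_def by simp

lemma atom_b_or_c_in_bc: "X \<in> {Ab, Ac} \<Longrightarrow> h {X} \<subseteq> bc_rel"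
  unfolding bc_rel_def by (rule h_mono) auto

lemma bc_neighbour_exists: "x \<in> U \<Longrightarrow> bc_rel `` {x} \<noteq> {}"
  using h_le_comp[OF identity_le_ra_comp_b_b] h_identity atom_b_or_c_in_bc[of Ab]
  by blast

lemma a_iff_nonadjacent:
  "(x, y) \<in> h {Aa} \<longleftrightarrow> x \<in> U \<and> y \<in> U \<and> x \<noteq> y \<and> (x, y) \<notin> bc_rel"
proof -
  have "UNIV = {E} \<union> {Aa} \<union> {Ab, Ac}"
    using atom.exhaust by blast
  then have "U \<times> U = h ({E} \<union> {Aa} \<union> {Ab, Ac})"
    by (simp only: h_UNIV)
  also have "\<dots> = Id_on U \<union> h {Aa} \<union> bc_rel"
    by (simp only: h_Un h_identity bc_rel_def)
  finally have "U \<times> U \<subseteq> Id_on U \<union> h {Aa} \<union> bc_rel"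
    by (rule equalityD1)
  moreover have "h {Aa} \<inter> Id_on U = {}" and "h {Aa} \<inter> bc_rel = {}"
    unfolding bc_rel_def h_identity[symmetric] by (simp_all add: h_disjoint)
  moreover have "h {Aa} \<subseteq> U \<times> U"
    by (rule h_subset)
  ultimately show ?thesis
    by blast
qed

text \<open>The witnesses of \<open>a \<le> X;Y\<close> for \<open>X, Y \<in> {b, c}\<close> are pairwise distinct, since \<open>b\<close> and \<open>c\<close>
are disjoint and two different choices of \<open>(X, Y)\<close> differ on one of the two legs.\<close>

lemma nonadjacent_common_bc_neighbours:
  assumes "finite U" and "x \<in> U" and "y \<in> U" and "x \<noteq> y" and "(x, y) \<notin> bc_rel"
  shows "4 \<le> card (bc_rel `` {x} \<inter> bc_rel `` {y})"
proof -
  define S where "S = {Ab, Ac} \<times> {Ab, Ac}"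
  have xy: "(x, y) \<in> h {Aa}"
    using assms(2-) a_iff_nonadjacent by blast
  have "\<exists>z. (x, z) \<in> h {fst p} \<and> (z, y) \<in> h {snd p}" if "p \<in> S" for p
  proof -
    have "h {Aa} \<subseteq> h {fst p} O h {snd p}"
      using that by (intro h_le_comp a_le_ra_comp_b_or_c) (auto simp: S_def)
    with xy show ?thesis
      by blast
  qed
  then obtain w where w: "\<And>p. p \<in> S \<Longrightarrow> (x, w p) \<in> h {fst p} \<and> (w p, y) \<in> h {snd p}"
    by metis
  have "inj_on w S"
  proof (rule inj_onI)
    fix p p' assume "p \<in> S" "p' \<in> S" "w p = w p'"
    then have "fst p = fst p'" and "snd p = snd p'"
      using w[of p] w[of p'] h_atoms_disjoint by metis+
    then show "p = p'"
      by (rule prod_eqI)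
  qed
  moreover have "w ` S \<subseteq> bc_rel `` {x} \<inter> bc_rel `` {y}"
  proof
    fix z assume "z \<in> w ` S"
    then obtain p where "fst p \<in> {Ab, Ac}" "snd p \<in> {Ab, Ac}"
      and "(x, z) \<in> h {fst p}" "(z, y) \<in> h {snd p}"
      using w unfolding S_def by fastforce
    then have "(x, z) \<in> bc_rel" and "(z, y) \<in> bc_rel"
      using atom_b_or_c_in_bc by blast+
    then show "z \<in> bc_rel `` {x} \<inter> bc_rel `` {y}"
      using sym_bc by (auto dest: symD)
  qed
  moreover have "finite (bc_rel `` {x} \<inter> bc_rel `` {y})"
    using assms(1) bc_subset by (auto intro: finite_subset)
  ultimately have "card S \<le> card (bc_rel `` {x} \<inter> bc_rel `` {y})"
    using card_image card_mono by metis
  then show ?thesis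
    by (simp add: S_def card_cartesian_product)
qed

lemma bc_edge_nonadjacent_witness:
  assumes "(x, q) \<in> bc_rel"
  shows "\<exists>w\<in>U. w \<noteq> x \<and> (x, w) \<notin> bc_rel \<and> (w, q) \<notin> bc_rel"
proof -
  obtain w where "(x, w) \<in> h {Aa}" and "(w, q) \<in> h {Aa}"
    using assms h_le_comp[OF bc_le_ra_comp_a_a] unfolding bc_rel_def by blast
  then show ?thesis
    unfolding a_iff_nonadjacent by auto
qed

end

theorem mainTheorem5:
  fixes U :: "'u set"
  assumes "finite U" and "card U = 11"
  shows "\<not> has_representation_over U"
proof
  assume "has_representation_over U"
  then obtain h where "representation U h"
    unfolding has_representation_over_def by blast
  then interpret representation_32_65 U h
    by unfold_locales
  have "U \<noteq> {}"
    using assms(2) by auto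
  then have "16 \<le> card U"
    by (rule triangle_free_card_ge_16[OF assms(1) _ bc_subset sym_bc bc_triangle_free
          bc_neighbour_exists nonadjacent_common_bc_neighbours[OF assms(1)]
          bc_edge_nonadjacent_witness])
  with assms(2) show False
    by simp
qed

end
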